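(* Let the setting and assumptions described in the context hold. Then for any $h>0$, any $\mathcal{F}_0$-measurable initial value $u_h^0\in L^2(\Omega,\mathcal{F}_0,\mathbb{P};\mathbb{H})$ with values in $\mathbb{V}_h$, any $r\in\mathbb{N}$ and any time step $\tau\le \frac{1}{\lambda_B}$, there exists a unique solution $\{u_h^n\}_{n=1}^N\subset \mathbb{V}_h$ of the fully discrete scheme $$\left(u_h^n-u_h^{n-1},v_h\right)_{\mathbb{H}}+\tau \langle A u_h^n,v_h\rangle_{\mathbb{V}^*\times\mathbb{V}} = \tau \langle b^n,v_h\rangle_{\mathbb{V}^*\times\mathbb{V}} + \left(\sigma^r(u_h^{n-1})\Delta_n W, v_h\right)_{\mathbb{H}}\quad\forall v_h\in\mathbb{V}_h,\ n=1,\dots,N.$$ Moreover, the $\mathbb{V}_h$-valued random variables $u_h^n$ are $\mathcal{F}_{t_n}$-measurable, $n=1,\dots,N$.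
   Context: Let $\mathcal{D}\subset\mathbb{R}^d$, $d\ge1$, be a bounded open domain with $\mathcal{C}^{1,1}$ boundary or a rectangular domain, $T>0$, $p>1$, $p'=p/(p-1)$. Let $\mathbb{H}=H^{-1}(\mathcal{D})$ (dual of $H^1_0(\mathcal{D})$) with inner product $(v,w)_{\mathbb{H}}=(v,(-\Delta)^{-1}w)_{L^2}$, where $(-\Delta)^{-1}$ is the inverse of the homogeneous Dirichlet Laplacian, and let $\mathbb{V}=L^p(\mathcal{D})\cap H^{-1}(\mathcal{D})$ with its intersection norm, so that $\mathbb{V}\hookrightarrow\mathbb{H}\equiv\mathbb{H}^*\hookrightarrow\mathbb{V}^*$ is a Gelfand triple. Let $(\Omega,\mathcal{F},\{\mathcal{F}_t\},\mathbb{P})$ be a filtered probability space, $\mathbb{K}$ a real separable Hilbert space with orthonormal basis $\{\tilde e_i\}$, and $W=\sum_i\tilde e_i\beta_i$ a cylindrical Wiener process on $\mathbb{K}$ with independent Brownian motions $\beta_i$. $L_2(\mathbb{K},\mathbb{H})$ denotes the Hilbert–Schmidt operators. Let $\alpha:\mathbb{R}\to\mathbb{R}$ be continuous, monotonically increasing, with $\alpha(z)z\ge\mu|z|^p-\lambda$ and $|\alpha(z)|\le c(|z|+1)^{p-1}$, and define $A:\mathbb{V}\to\mathbb{V}^*$ by $\langle Au,v\rangle=(\alpha(u),v)_{L^2}$. Let $\sigma:\mathbb{V}\to L_2(\mathbb{K},\mathbb{H})$. Assume: (i) $\epsilon\mapsto\langle A(w+\epsilon z),v\rangle$ is continuous on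 $[0,1]$ for all $v,w,z\in\mathbb{V}$; (ii) there is $\lambda_B\ge0$ with $2\langle Av-Aw,v-w\rangle+\lambda_B\|v-w\|_{\mathbb{H}}^2\ge\|\sigma(v)-\sigma(w)\|_{L_2(\mathbb{K},\mathbb{H})}^2$ for all $v,w\in\mathbb{V}$; (iii) there are $\mu>0$, $\lambda,\lambda_A,\kappa_\sigma\ge0$ with $\langle Av,v\rangle+\lambda_A\|v\|_{\mathbb{H}}^2\ge\mu\|v\|_{\mathbb{V}}^p-\lambda|\mathcal{D}|+\frac12\|\sigma(v)\|_{L_2(\mathbb{K},\mathbb{H})}^2-\kappa_\sigma$ for all $v\in\mathbb{V}$; (iv) $\|Av\|_{\mathbb{V}^*}\le C(\|v\|_{\mathbb{V}}+1)^{p-1}$ for all $v\in\mathbb{V}$. Let $f\in L^\infty(\Omega\times(0,T)\times\mathcal{D})$, $g\in L^\infty(\Omega\times(0,T)\times\partial\mathcal{D})$ be progressively measurable, and define $b(s)\in\mathbb{V}^*$ by $\langle b(s),v\rangle=(f(s),(-\Delta)^{-1}v)_{L^2}-(g(s),\partial_{\vec n}(-\Delta)^{-1}v)_{L^2(\partial\mathcal{D})}$. Let $(\mathbb{V}_h)_{h>0}$ be finite-dimensional subspaces of $\mathbb{V}$. Time discretization: $\tau=T/N$, $t_n=n\tau$; $b^n=\frac1\tau\int_{t_{n-1}}^{t_n}b(t)\,dt$; $\Delta_1\beta_i=0$ and $\Delta_n\beta_i=\beta_i(t_n)-\beta_i(t_{n-1})$ for $n\ge2$, $\Delta_nW=\sum_i\tilde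 e_i\Delta_n\beta_i$; for $r\in\mathbb{N}$, $\sigma^r(u)w=\sum_{i=1}^r\sigma(u)\tilde e_i(w,\tilde e_i)_{\mathbb{K}}$. *)

theory Defs
  imports "HOL-Probability.Probability"
begin

text \<open>The pivot Hilbert space H is a type
 'h of class real_inner + complete_space; the reflexive Banach space V is a
 dense linear subspace V of H with its own norm nV, continuously embedded.\<close>

definition banach_subspace :: "'h::{real_inner,complete_space} set \<Rightarrow> ('h \<Rightarrow> real) \<Rightarrow> bool" where
  "banach_subspace V nV \<longleftrightarrow>
     subspace V \<and>
     (\<forall>v\<in>V. 0 \<le> nV v) \<and> (\<forall>v\<in>V. nV v = 0 \<longleftrightarrow> v = 0) \<and>
     (\<forall>v\<in>V. \<forall>c::real. nV (c *\<^sub>R v) = \<bar>c\<bar> * nV v) \<and>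
     (\<forall>v\<in>V. \<forall>w\<in>V. nV (v + w) \<le> nV v + nV w) \<and>
     (\<forall>X. (\<forall>k. X k \<in> V) \<and> (\<forall>e>0. \<exists>K. \<forall>m\<ge>K. \<forall>n\<ge>K. nV (X m - X n) < e)
          \<longrightarrow> (\<exists>x\<in>V. (\<lambda>k. nV (X k - x)) \<longlonglongrightarrow> 0)) \<and>
     (\<exists>cE>0. \<forall>v\<in>V. norm v \<le> cE * nV v) \<and>
     closure V = UNIV"

text \<open>Squared Hilbert--Schmidt norm of sigma(v) w.r.t. the orthonormal basis
 e_0, e_1, ... of K: the operator sigma(v) is represented by its values
 sig v i = sigma(v) e_i in H.\<close>

definition hs_norm2 :: "(nat \<Rightarrow> 'h::real_inner) \<Rightarrow> real" where
  "hs_norm2 s = (\<Sum>i. (norm (s i))\<^sup>2)"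

definition brownian_motion :: "'w measure \<Rightarrow> (real \<Rightarrow> 'w measure) \<Rightarrow> (real \<Rightarrow> 'w \<Rightarrow> real) \<Rightarrow> bool" where
  "brownian_motion M F \<beta> \<longleftrightarrow>
     (\<forall>t\<ge>0. \<beta> t \<in> borel_measurable (F t)) \<and>
     (\<forall>\<omega>\<in>space M. \<beta> 0 \<omega> = 0) \<and>
     (\<forall>\<omega>\<in>space M. continuous_on {0..} (\<lambda>t. \<beta> t \<omega>)) \<and>
     (\<forall>s t. 0 \<le> s \<and> s < t \<longrightarrow>
        distributed M lborel (\<lambda>\<omega>. \<beta> t \<omega> - \<beta> s \<omega>) (\<lambda>x. ennreal (normal_density 0 (sqrt (t - s)) x)) \<and>
        (\<forall>A\<in>sets (F s). \<forall>B\<in>sets borel.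
           measure M (A \<inter> ((\<lambda>\<omega>. \<beta> t \<omega> - \<beta> s \<omega>) -` B \<inter> space M)) =
           measure M A * measure M ((\<lambda>\<omega>. \<beta> t \<omega> - \<beta> s \<omega>) -` B \<inter> space M)))"

text \<open>Time average b^n of the right-hand side b over (t_{n-1}, t_n),
 acting on v (Bochner average in V*, evaluated weakly).\<close>

definition b_avg :: "('w \<Rightarrow> real \<Rightarrow> 'h \<Rightarrow> real) \<Rightarrow> real \<Rightarrow> 'w \<Rightarrow> nat \<Rightarrow> 'h \<Rightarrow> real" where
  "b_avg b \<tau> \<omega> n v = (1 / \<tau>) * (LBINT s=real (n - 1) * \<tau>..real n * \<tau>. b \<omega> s v)"

definition dBeta :: "(nat \<Rightarrow> real \<Rightarrow> 'w \<Rightarrow> real) \<Rightarrow> real \<Rightarrow> nat \<Rightarrow> nat \<Rightarrow> 'w \<Rightarrow> real" where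
  "dBeta \<beta> \<tau> n i \<omega> = (if n \<le> 1 then 0 else \<beta> i (real n * \<tau>) \<omega> - \<beta> i (real (n - 1) * \<tau>) \<omega>)"

text \<open>u solves the fully discrete scheme (pathwise, for every omega) for n = 1..N,
 with u^0 = u0 and noise truncated to the first r basis directions.\<close>

definition discrete_solution ::
  "'w measure \<Rightarrow> 'h::real_inner set \<Rightarrow> ('h \<Rightarrow> 'h \<Rightarrow> real) \<Rightarrow> ('w \<Rightarrow> real \<Rightarrow> 'h \<Rightarrow> real) \<Rightarrow>
   ('h \<Rightarrow> nat \<Rightarrow> 'h) \<Rightarrow> (nat \<Rightarrow> real \<Rightarrow> 'w \<Rightarrow> real) \<Rightarrow> nat \<Rightarrow> real \<Rightarrow> nat \<Rightarrow>
   ('w \<Rightarrow> 'h) \<Rightarrow> (nat \<Rightarrow> 'w \<Rightarrow> 'h) \<Rightarrow> bool" where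
  "discrete_solution M Vh A b sig \<beta> N \<tau> r u0 u \<longleftrightarrow>
     (\<forall>\<omega>\<in>space M. u 0 \<omega> = u0 \<omega>) \<and>
     (\<forall>n\<in>{1..N}. \<forall>\<omega>\<in>space M. u n \<omega> \<in> Vh \<and>
        (\<forall>v\<in>Vh. inner (u n \<omega> - u (n - 1) \<omega>) v + \<tau> * A (u n \<omega>) v =
                 \<tau> * b_avg b \<tau> \<omega> n v
                 + (\<Sum>i<r. dBeta \<beta> \<tau> n i \<omega> * inner (sig (u (n - 1) \<omega>) i) v)))"

end

theory Submission
  imports Defs
begin

(* Pathwise, each step of the scheme is an implicit Euler step: given u^(n-1), the unknown
   u^n in V_h solves (u, v) + tau <A u, v> = l(v) for all v in V_h, where l is the step
   functional built from u^(n-1), b^n and the noise increments.  Condition (ii) together with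
   tau lambda_B <= 1 makes u |-> (u, .) + tau <A u, .> strongly monotone on V_h; this gives
   uniqueness and a Lipschitz solution map, while existence on the finite-dimensional V_h is a
   Minty-Browder argument (induction over an orthonormal basis, intermediate value theorem).
   It needs u |-> <A u, v> continuous on V_h, which follows from hemicontinuity (i),
   monotonicity and the growth bound (iv).  Finally l depends on omega only through finitely
   many F_(t_n)-measurable real coefficients, and the solution map is continuous, so u^n is
   F_(t_n)-measurable by induction on n. *)

section \<open>Orthonormal bases and linear forms\<close>

definition orthonormal_set :: "'a::real_inner set \<Rightarrow> bool" where
  "orthonormal_set E \<longleftrightarrow> pairwise orthogonal E \<and> (\<forall>e\<in>E. norm e = 1)"

definition linear_form_on :: "'a::real_vector set \<Rightarrow> ('a \<Rightarrow> real) \<Rightarrow> bool" where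
  "linear_form_on W g \<longleftrightarrow> (\<forall>x\<in>W. \<forall>y\<in>W. \<forall>c. g (c *\<^sub>R x + y) = c * g x + g y)"

lemma orthonormal_basis_of_span:
  fixes T :: "'a::real_inner set"
  assumes "finite T"
  obtains E where "finite E" "orthonormal_set E" "span E = span T"
proof -
  obtain C where C: "finite C" "span C = span T" "pairwise orthogonal C"
    using basis_orthogonal[OF assms] by blast
  define E where "E = (\<lambda>x. (1 / norm x) *\<^sub>R x) ` (C - {0})"
  have "span E = span (C - {0})"
    unfolding E_def by (rule span_image_scale) (use C(1) in auto)
  then have "span E = span T"
    using C(2) by simp
  moreover have "pairwise orthogonal E"
    using C(3) unfolding E_def pairwise_image by (auto simp: pairwise_def orthogonal_def)
  moreover have "finite E" "\<forall>e\<in>E. norm e = 1"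
    using C(1) unfolding E_def by auto
  ultimately show thesis
    using that unfolding orthonormal_set_def by blast
qed

lemma orthonormal_inner_sum:
  fixes E :: "'a::real_inner set"
  assumes "finite E" "orthonormal_set E" "e \<in> E"
  shows "inner (\<Sum>x\<in>E. c x *\<^sub>R x) e = c e"
proof -
  have "inner (\<Sum>x\<in>E. c x *\<^sub>R x) e = (\<Sum>x\<in>E. if x = e then c e else 0)"
    unfolding inner_sum_left
    using assms(2,3) by (intro sum.cong) (auto simp: orthonormal_set_def pairwise_def orthogonal_def dot_square_norm)
  then show ?thesis
    using assms(1,3) by simp
qed

lemma orthonormal_expansion:
  fixes E :: "'a::real_inner set"
  assumes "finite E" "orthonormal_set E" "x \<in> span E"
  shows "x = (\<Sum>e\<in>E. inner x e *\<^sub>R e)"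
proof -
  obtain c where c: "x = (\<Sum>e\<in>E. c e *\<^sub>R e)"
    using assms(3) span_finite[OF assms(1)] by auto
  then have "inner x e = c e" if "e \<in> E" for e
    using orthonormal_inner_sum[OF assms(1,2) that] by simp
  then show ?thesis
    using c by simp
qed

lemma orthonormal_set_insertD:
  assumes "orthonormal_set (insert e E)" "e \<notin> E"
  shows "orthonormal_set E" "norm e = 1" "\<And>w. w \<in> span E \<Longrightarrow> orthogonal e w"
proof -
  show "orthonormal_set E" "norm e = 1"
    using assms(1) by (simp_all add: orthonormal_set_def pairwise_insert)
  have "orthogonal e y" if "y \<in> E" for y
    using assms that unfolding orthonormal_set_def pairwise_def by auto
  then show "orthogonal e w" if "w \<in> span E" for w
    using that orthogonal_to_span by blast
qed

lemma linear_form_on_zero: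
  assumes "linear_form_on W g" "0 \<in> W"
  shows "g 0 = 0"
proof -
  have "g (1 *\<^sub>R 0 + 0) = 1 * g 0 + g 0"
    using assms unfolding linear_form_on_def by blast
  then show ?thesis by simp
qed

lemma linear_form_on_uminus:
  assumes "linear_form_on W g" "subspace W" "x \<in> W"
  shows "g (- x) = - g x"
proof -
  have "g ((- 1) *\<^sub>R x + 0) = (- 1) * g x + g 0"
    using assms subspace_0 unfolding linear_form_on_def by blast
  then show ?thesis
    using linear_form_on_zero[OF assms(1) subspace_0[OF assms(2)]] by simp
qed

lemma linear_form_on_subset:
  assumes "linear_form_on V g" "W \<subseteq> V"
  shows "linear_form_on W g"
  using assms unfolding linear_form_on_def by blast

lemma linear_form_on_sum:
  assumes "linear_form_on W g" "subspace W" "finite S" "S \<subseteq> W"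
  shows "g (\<Sum>e\<in>S. c e *\<^sub>R e) = (\<Sum>e\<in>S. c e * g e)"
  using assms(3,4)
proof (induction S rule: finite_induct)
  case empty
  then show ?case
    using linear_form_on_zero[OF assms(1) subspace_0[OF assms(2)]] by simp
next
  case (insert a S)
  have "(\<Sum>e\<in>S. c e *\<^sub>R e) \<in> W"
    using insert.prems assms(2) by (intro subspace_sum subspace_scale) auto
  then show ?case
    using insert assms(1) unfolding linear_form_on_def by simp
qed

lemma linear_form_on_vanishes_insert:
  assumes "linear_form_on (span (insert e E)) g" "g e = 0" "\<And>v. v \<in> span E \<Longrightarrow> g v = 0"
  shows "\<forall>v\<in>span (insert e E). g v = 0"
proof
  fix v assume "v \<in> span (insert e E)"
  then obtain k where k: "v - k *\<^sub>R e \<in> span E"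
    using span_breakdown_eq by blast
  moreover have "e \<in> span (insert e E)" "v - k *\<^sub>R e \<in> span (insert e E)"
    using k span_mono[of E "insert e E"] by (auto intro: span_base)
  ultimately have "g (k *\<^sub>R e + (v - k *\<^sub>R e)) = k * g e + g (v - k *\<^sub>R e)"
    using assms(1) unfolding linear_form_on_def by blast
  then show "g v = 0"
    using assms(2,3) k by simp
qed

lemma orthonormal_representer:
  fixes E :: "'a::real_inner set"
  assumes "finite E" "orthonormal_set E" "linear_form_on (span E) g" "v \<in> span E"
  shows "inner (\<Sum>e\<in>E. g e *\<^sub>R e) v = g v"
proof -
  have "inner (\<Sum>e\<in>E. g e *\<^sub>R e) v = (\<Sum>e\<in>E. inner v e * g e)"
    unfolding inner_sum_left by (simp add: inner_commute mult.commute)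
  also have "\<dots> = g (\<Sum>e\<in>E. inner v e *\<^sub>R e)"
    using assms(1,3) by (simp add: linear_form_on_sum span_superset)
  also have "\<dots> = g v"
    using orthonormal_expansion[OF assms(1,2,4)] by simp
  finally show ?thesis .
qed

section \<open>Strongly monotone forms on a finite-dimensional space\<close>

text \<open>The constant \<open>c\<close> may be negative: \<open>c = - lam\<close> expresses monotonicity up to a
  quadratic perturbation, as in condition (ii).\<close>

definition strongly_monotone_on :: "'a::real_normed_vector set \<Rightarrow> real \<Rightarrow> ('a \<Rightarrow> 'a \<Rightarrow> real) \<Rightarrow> bool" where
  "strongly_monotone_on W c f \<longleftrightarrow>
     (\<forall>u\<in>W. \<forall>u'\<in>W. c * (norm (u - u'))\<^sup>2 \<le> f u (u - u') - f u' (u - u'))"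

lemma strongly_monotone_on_inner_plus:
  assumes "strongly_monotone_on W c A" "\<tau> \<ge> 0"
  shows "strongly_monotone_on W (1 + \<tau> * c) (\<lambda>u v. inner u v + \<tau> * A u v)"
  unfolding strongly_monotone_on_def
proof (intro ballI)
  fix u u' assume "u \<in> W" "u' \<in> W"
  then have "\<tau> * (c * (norm (u - u'))\<^sup>2) \<le> \<tau> * (A u (u - u') - A u' (u - u'))"
    using assms unfolding strongly_monotone_on_def by (simp add: mult_left_mono)
  moreover have "inner u (u - u') - inner u' (u - u') = (norm (u - u'))\<^sup>2"
    by (simp add: power2_norm_eq_inner inner_diff_left)
  ultimately show "(1 + \<tau> * c) * (norm (u - u'))\<^sup>2
      \<le> inner u (u - u') + \<tau> * A u (u - u') - (inner u' (u - u') + \<tau> * A u' (u - u'))"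
    by (simp add: algebra_simps)
qed

lemma strongly_monotone_on_inj:
  assumes "strongly_monotone_on W c f" "c > 0" "subspace W" "u \<in> W" "u' \<in> W"
    and "\<forall>v\<in>W. f u v = f u' v"
  shows "u = u'"
proof -
  have "u - u' \<in> W"
    using assms(3-5) by (rule subspace_diff)
  then have "c * (norm (u - u'))\<^sup>2 \<le> 0"
    using assms(1,4-6) unfolding strongly_monotone_on_def by fastforce
  then show ?thesis
    using assms(2) by (simp add: mult_le_0_iff)
qed

lemma strongly_increasing_has_root:
  fixes h :: "real \<Rightarrow> real"
  assumes "c > 0" "continuous_on UNIV h"
    and key: "\<And>s s'. c * (s - s')\<^sup>2 \<le> (s - s') * (h s - h s')"
  shows "\<exists>s. h s = 0"
proof (cases "h 0 = 0")
  case False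
  define a where "a = \<bar>h 0\<bar> / c"
  have "a > 0" "c * a = \<bar>h 0\<bar>"
    using assms(1) False by (simp_all add: a_def)
  moreover have "a * (c * a) \<le> a * (h a - h 0)" "a * (c * a) \<le> a * (h 0 - h (- a))"
    using key[of a 0] key[of "- a" 0] by (simp_all add: power2_eq_square algebra_simps)
  ultimately have "h (- a) \<le> 0" "0 \<le> h a"
    by (simp_all add: mult_le_cancel_left_pos)
  then show ?thesis
    using IVT'[of h "- a" 0 a] \<open>a > 0\<close> continuous_on_subset[OF assms(2)] by auto
qed auto

lemma monotone_pair_local_bound:
  fixes X :: "real \<Rightarrow> 'a::real_normed_vector" and h :: "real \<Rightarrow> real"
  assumes "c > 0"
    and key: "\<And>s s'. c * ((norm (X s - X s'))\<^sup>2 + (s - s')\<^sup>2) \<le> (s - s') * (h s - h s')"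
    and "dist s s0 < 1"
  shows "c * (norm (X s - X s0))\<^sup>2 \<le> (h (s0 + 1) - h (s0 - 1)) * \<bar>s - s0\<bar>"
proof -
  have h_mono: "h s' \<le> h s" if "s' < s" for s s'
  proof -
    have "0 \<le> c * ((norm (X s - X s'))\<^sup>2 + (s - s')\<^sup>2)"
      using assms(1) by simp
    then have "0 \<le> (s - s') * (h s - h s')"
      using key by (rule order.trans)
    then show ?thesis
      using that by (simp add: zero_le_mult_iff)
  qed
  have "s0 - 1 < s" "s < s0 + 1"
    using assms(3) by (auto simp: dist_real_def)
  then have hb: "\<bar>h s - h s0\<bar> \<le> h (s0 + 1) - h (s0 - 1)"
    using h_mono[of s "s0 + 1"] h_mono[of "s0 - 1" s] h_mono[of s0 "s0 + 1"] h_mono[of "s0 - 1" s0]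
    by (simp add: abs_le_iff)
  have "c * (norm (X s - X s0))\<^sup>2 \<le> c * ((norm (X s - X s0))\<^sup>2 + (s - s0)\<^sup>2)"
    using assms(1) by simp
  also have "\<dots> \<le> (s - s0) * (h s - h s0)"
    by (rule key)
  also have "\<dots> \<le> \<bar>s - s0\<bar> * \<bar>h s - h s0\<bar>"
    by (metis abs_ge_self abs_mult)
  also have "\<dots> \<le> \<bar>s - s0\<bar> * (h (s0 + 1) - h (s0 - 1))"
    using hb by (rule mult_left_mono) simp
  finally show ?thesis
    by (simp add: mult.commute)
qed

lemma continuous_on_monotone_pair:
  fixes X :: "real \<Rightarrow> 'a::real_normed_vector" and h :: "real \<Rightarrow> real"
  assumes "c > 0"
    and key: "\<And>s s'. c * ((norm (X s - X s'))\<^sup>2 + (s - s')\<^sup>2) \<le> (s - s') * (h s - h s')"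
  shows "continuous_on UNIV X"
proof -
  have "isCont X s0" for s0
  proof -
    define K where "K = h (s0 + 1) - h (s0 - 1)"
    have "norm (X s - X s0) \<le> sqrt (K / c * \<bar>s - s0\<bar>)" if "dist s s0 < 1" for s
      using monotone_pair_local_bound[OF assms that] assms(1) unfolding K_def
      by (intro real_le_rsqrt) (simp add: field_simps)
    then have "\<forall>\<^sub>F s in at s0. norm (X s - X s0) \<le> sqrt (K / c * \<bar>s - s0\<bar>)"
      unfolding eventually_at using zero_less_one by blast
    moreover have "isCont (\<lambda>s. sqrt (K / c * \<bar>s - s0\<bar>)) s0"
      by (intro continuous_intros)
    then have "((\<lambda>s. sqrt (K / c * \<bar>s - s0\<bar>)) \<longlongrightarrow> 0) (at s0)"
      by (simp add: isCont_def)
    ultimately have "((\<lambda>s. X s - X s0) \<longlongrightarrow> 0) (at s0)"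
      by (rule Lim_null_comparison)
    then show ?thesis
      unfolding isCont_def by (rule LIM_zero_cancel)
  qed
  then show ?thesis
    by (simp add: continuous_at_imp_continuous_on)
qed

lemma slice_solutions_monotone:
  fixes e :: "'a::real_inner" and f :: "'a \<Rightarrow> 'a \<Rightarrow> real"
  assumes W: "subspace W" "W' \<subseteq> W" "subspace W'"
    and e: "e \<in> W" "norm e = 1" "\<And>w. w \<in> W' \<Longrightarrow> orthogonal e w"
    and lin: "\<And>u. u \<in> W \<Longrightarrow> linear_form_on W (f u)"
    and mono: "strongly_monotone_on W c f"
    and x: "x \<in> W'" "x' \<in> W'"
    and sol: "\<And>v. v \<in> W' \<Longrightarrow> f (x + s *\<^sub>R e) v = 0" "\<And>v. v \<in> W' \<Longrightarrow> f (x' + s' *\<^sub>R e) v = 0"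
  shows "c * ((norm (x - x'))\<^sup>2 + (s - s')\<^sup>2)
           \<le> (s - s') * (f (x + s *\<^sub>R e) e - f (x' + s' *\<^sub>R e) e)"
proof -
  define U U' where "U = x + s *\<^sub>R e" and "U' = x' + s' *\<^sub>R e"
  have "x - x' \<in> W'"
    using x W(3) by (simp add: subspace_diff)
  then have D: "x - x' \<in> W"
    using W(2) by blast
  have UW: "U \<in> W" "U' \<in> W"
    unfolding U_def U'_def using x e(1) W by (auto intro: subspace_add subspace_scale)
  have diff: "U - U' = (s - s') *\<^sub>R e + (x - x')"
    unfolding U_def U'_def by (simp add: algebra_simps)
  have "f U (U - U') = (s - s') * f U e + f U (x - x')"
    "f U' (U - U') = (s - s') * f U' e + f U' (x - x')"
    unfolding diff using lin[OF UW(1)] lin[OF UW(2)] e(1) D unfolding linear_form_on_def by blast+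
  moreover have "f U (x - x') = 0" "f U' (x - x') = 0"
    using sol \<open>x - x' \<in> W'\<close> unfolding U_def U'_def by blast+
  moreover have "(norm (U - U'))\<^sup>2 = (s - s')\<^sup>2 + (norm (x - x'))\<^sup>2"
    unfolding diff using e(2) e(3)[OF \<open>x - x' \<in> W'\<close>]
    by (simp add: norm_add_Pythagorean orthogonal_clauses)
  moreover have "c * (norm (U - U'))\<^sup>2 \<le> f U (U - U') - f U' (U - U')"
    using mono UW unfolding strongly_monotone_on_def by blast
  ultimately show ?thesis
    unfolding U_def[symmetric] U'_def[symmetric] by (simp add: right_diff_distrib add.commute)
qed

lemma strongly_monotone_form_shift:
  assumes "subspace W" "W' \<subseteq> W"
    and lin: "\<And>u. u \<in> W \<Longrightarrow> linear_form_on W (f u)"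
    and mono: "strongly_monotone_on W c f"
    and cont: "\<And>v. v \<in> W \<Longrightarrow> continuous_on W (\<lambda>u. f u v)"
    and "a \<in> W"
  shows "\<And>x. x \<in> W' \<Longrightarrow> linear_form_on W' (f (x + a))"
    and "strongly_monotone_on W' c (\<lambda>x. f (x + a))"
    and "\<And>v. v \<in> W' \<Longrightarrow> continuous_on W' (\<lambda>x. f (x + a) v)"
proof -
  have shift: "x + a \<in> W" if "x \<in> W'" for x
    using that assms(1,2,6) by (blast intro: subspace_add)
  show "linear_form_on W' (f (x + a))" if "x \<in> W'" for x
    using lin[OF shift[OF that]] assms(2) by (rule linear_form_on_subset)
  show "strongly_monotone_on W' c (\<lambda>x. f (x + a))"
    unfolding strongly_monotone_on_def
  proof (intro ballI)
    fix x x' assume "x \<in> W'" "x' \<in> W'"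
    then have "c * (norm (x + a - (x' + a)))\<^sup>2 \<le> f (x + a) (x + a - (x' + a)) - f (x' + a) (x + a - (x' + a))"
      using mono shift unfolding strongly_monotone_on_def by blast
    then show "c * (norm (x - x'))\<^sup>2 \<le> f (x + a) (x - x') - f (x' + a) (x - x')"
      by simp
  qed
  show "continuous_on W' (\<lambda>x. f (x + a) v)" if "v \<in> W'" for v
  proof (rule continuous_on_compose2[OF cont])
    show "continuous_on W' (\<lambda>x. x + a)"
      by (intro continuous_intros)
  qed (use that assms(2) shift in auto)
qed

text \<open>Finite-dimensional Minty--Browder theorem, by induction on the dimension: for each
  \<open>s\<close> solve on the hyperplane orthogonal to \<open>e\<close> at height \<open>s\<close>, then choose \<open>s\<close>
  by the intermediate value theorem.\<close>

theorem strongly_monotone_form_has_zero: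
  fixes E :: "'a::real_inner set" and f :: "'a \<Rightarrow> 'a \<Rightarrow> real"
  assumes "finite E" "orthonormal_set E" "c > 0"
    and "\<And>u. u \<in> span E \<Longrightarrow> linear_form_on (span E) (f u)"
    and "strongly_monotone_on (span E) c f"
    and "\<And>v. v \<in> span E \<Longrightarrow> continuous_on (span E) (\<lambda>u. f u v)"
  shows "\<exists>u\<in>span E. \<forall>v\<in>span E. f u v = 0"
  using assms(1,2,4-6)
proof (induction E arbitrary: f rule: finite_induct)
  case empty
  then show ?case
    using linear_form_on_zero[of "span {}" "f 0"] by auto
next
  case (insert e E f)
  let ?W = "span (insert e E)" and ?W' = "span E"
  have E: "orthonormal_set E" and e: "norm e = 1" "\<And>w. w \<in> ?W' \<Longrightarrow> orthogonal e w"
    using orthonormal_set_insertD[OF insert.prems(1) insert.hyps(2)] by blast+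
  have sub: "?W' \<subseteq> ?W" and eW: "e \<in> ?W"
    by (auto simp: span_mono subset_insertI span_base)
  have shift: "x + s *\<^sub>R e \<in> ?W" if "x \<in> ?W'" for x s
    using that sub eW by (meson span_add span_scale subsetD)
  have "\<exists>x\<in>?W'. \<forall>v\<in>?W'. f (x + s *\<^sub>R e) v = 0" for s
    using strongly_monotone_form_shift[OF subspace_span sub insert.prems(2-4) span_scale[OF eW]]
    by (intro insert.IH[OF E]) auto
  then obtain X where X: "\<And>s. X s \<in> ?W'" "\<And>s v. v \<in> ?W' \<Longrightarrow> f (X s + s *\<^sub>R e) v = 0"
    by metis
  define h where "h s = f (X s + s *\<^sub>R e) e" for s
  have key: "c * ((norm (X s - X s'))\<^sup>2 + (s - s')\<^sup>2) \<le> (s - s') * (h s - h s')" for s s'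
    unfolding h_def
    by (rule slice_solutions_monotone[OF subspace_span sub subspace_span eW e insert.prems(2,3) X(1,1) X(2,2)])
  have "continuous_on UNIV X"
    using key assms(3) by (rule continuous_on_monotone_pair[rotated])
  then have "continuous_on UNIV (\<lambda>s. X s + s *\<^sub>R e)"
    by (intro continuous_intros)
  then have "continuous_on UNIV h"
    unfolding h_def using shift X(1) by (intro continuous_on_compose2[OF insert.prems(4)[OF eW]]) auto
  moreover have "c * (s - s')\<^sup>2 \<le> (s - s') * (h s - h s')" for s s'
  proof -
    have "c * (s - s')\<^sup>2 \<le> c * ((norm (X s - X s'))\<^sup>2 + (s - s')\<^sup>2)"
      using assms(3) by simp
    then show ?thesis
      using key[of s s'] by linarith
  qed
  ultimately obtain s where "h s = 0"
    using strongly_increasing_has_root assms(3) by blast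
  then show ?case
    using linear_form_on_vanishes_insert[OF insert.prems(2)[OF shift[OF X(1)]] _ X(2)] shift[OF X(1)]
    unfolding h_def by blast
qed

lemma strongly_monotone_solution_lipschitz:
  assumes "strongly_monotone_on W c f" "subspace W" "u \<in> W" "u' \<in> W"
    and "\<forall>v\<in>W. f u v = inner y v" "\<forall>v\<in>W. f u' v = inner y' v"
  shows "c * norm (u - u') \<le> norm (y - y')"
proof -
  have "u - u' \<in> W"
    using assms(2-4) by (rule subspace_diff)
  then have "c * (norm (u - u'))\<^sup>2 \<le> inner (y - y') (u - u')"
    using assms unfolding strongly_monotone_on_def inner_diff_left by metis
  also have "\<dots> \<le> norm (y - y') * norm (u - u')"
    by (rule norm_cauchy_schwarz)
  finally have "(c * norm (u - u')) * norm (u - u') \<le> norm (y - y') * norm (u - u')"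
    by (simp add: power2_eq_square mult.assoc)
  then show ?thesis
    by (cases "u = u'") (simp_all add: mult_le_cancel_right)
qed

lemma strongly_monotone_solution_operator:
  fixes E :: "'a::real_inner set" and f :: "'a \<Rightarrow> 'a \<Rightarrow> real"
  assumes "finite E" "orthonormal_set E" "c > 0"
    and lin: "\<And>u. u \<in> span E \<Longrightarrow> linear_form_on (span E) (f u)"
    and mono: "strongly_monotone_on (span E) c f"
    and cont: "\<And>v. v \<in> span E \<Longrightarrow> continuous_on (span E) (\<lambda>u. f u v)"
  obtains Sol where "continuous_on UNIV Sol" "\<And>y. Sol y \<in> span E"
    "\<And>y v. v \<in> span E \<Longrightarrow> f (Sol y) v = inner y v"
proof -
  have "\<exists>u\<in>span E. \<forall>v\<in>span E. f u v - inner y v = 0" for y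
  proof (rule strongly_monotone_form_has_zero[OF assms(1-3)])
    show "linear_form_on (span E) (\<lambda>v. f u v - inner y v)" if "u \<in> span E" for u
      using lin[OF that] unfolding linear_form_on_def by (simp add: inner_add_right algebra_simps)
    show "strongly_monotone_on (span E) c (\<lambda>u v. f u v - inner y v)"
      using mono unfolding strongly_monotone_on_def by simp
    show "continuous_on (span E) (\<lambda>u. f u v - inner y v)" if "v \<in> span E" for v
      using cont[OF that] by (intro continuous_intros)
  qed
  then have "\<forall>y. \<exists>u. u \<in> span E \<and> (\<forall>v\<in>span E. f u v = inner y v)"
    by (simp add: Bex_def)
  then obtain Sol where Sol: "\<And>y. Sol y \<in> span E" "\<And>y v. v \<in> span E \<Longrightarrow> f (Sol y) v = inner y v"
    using choice[of "\<lambda>y u. u \<in> span E \<and> (\<forall>v\<in>span E. f u v = inner y v)"] by blast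
  have "dist (Sol y) (Sol y') \<le> 1 / c * dist y y'" for y y'
  proof -
    have "c * dist (Sol y) (Sol y') \<le> dist y y'"
      unfolding dist_norm using Sol
      by (intro strongly_monotone_solution_lipschitz[OF mono subspace_span]) auto
    then show ?thesis
      using \<open>c > 0\<close> by (simp add: field_simps)
  qed
  then have "continuous_on UNIV Sol"
    using \<open>c > 0\<close> by (intro lipschitz_on_continuous_on[of "1 / c"]) (simp add: lipschitz_on_def)
  then show thesis
    using that Sol by blast
qed

lemma implicit_step_solution_operator:
  fixes E :: "'a::real_inner set"
  assumes E: "finite E" "orthonormal_set E"
    and lin: "\<And>u. u \<in> span E \<Longrightarrow> linear_form_on (span E) (A u)"
    and mono: "strongly_monotone_on (span E) (- lam) A"
    and cont: "\<And>v. v \<in> span E \<Longrightarrow> continuous_on (span E) (\<lambda>u. A u v)"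
    and "\<tau> \<ge> 0" "\<tau> * lam < 1"
  obtains Sol where "continuous_on UNIV Sol" "\<And>y. Sol y \<in> span E"
    "\<And>y v. v \<in> span E \<Longrightarrow> inner (Sol y) v + \<tau> * A (Sol y) v = inner y v"
proof (rule strongly_monotone_solution_operator[OF E, where c = "1 - \<tau> * lam"])
  show "0 < 1 - \<tau> * lam"
    using \<open>\<tau> * lam < 1\<close> by simp
  show "strongly_monotone_on (span E) (1 - \<tau> * lam) (\<lambda>u v. inner u v + \<tau> * A u v)"
    using strongly_monotone_on_inner_plus[OF mono \<open>\<tau> \<ge> 0\<close>] by simp
  show "linear_form_on (span E) (\<lambda>v. inner u v + \<tau> * A u v)" if "u \<in> span E" for u
    using lin[OF that] unfolding linear_form_on_def by (simp add: inner_add_right algebra_simps)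
  show "continuous_on (span E) (\<lambda>u. inner u v + \<tau> * A u v)" if "v \<in> span E" for v
    using cont[OF that] by (intro continuous_intros)
qed (rule that)

section \<open>Continuity from hemicontinuity, monotonicity and growth\<close>

definition locally_bounded_on :: "'a::real_normed_vector set \<Rightarrow> ('a \<Rightarrow> 'a \<Rightarrow> real) \<Rightarrow> bool" where
  "locally_bounded_on W A \<longleftrightarrow>
     (\<forall>w\<in>W. \<exists>K\<ge>0. \<forall>v\<in>W. norm (v - w) \<le> 1 \<longrightarrow> (\<forall>y\<in>W. \<bar>A v y\<bar> \<le> K * norm y))"

lemma continuous_on_dominated_by_monotone:
  fixes S :: "'a::real_normed_vector \<Rightarrow> 'b::real_normed_vector"
  assumes bdd: "locally_bounded_on W A"
    and dom: "\<And>v w. v \<in> W \<Longrightarrow> w \<in> W \<Longrightarrow>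
      (norm (S v - S w))\<^sup>2 \<le> 2 * (A v (v - w) - A w (v - w)) + lam * (norm (v - w))\<^sup>2"
    and "subspace W"
  shows "continuous_on W S"
  unfolding continuous_on_def
proof
  fix w assume w: "w \<in> W"
  then obtain K where K: "\<And>v y. v \<in> W \<Longrightarrow> norm (v - w) \<le> 1 \<Longrightarrow> y \<in> W \<Longrightarrow> \<bar>A v y\<bar> \<le> K * norm y"
    using bdd unfolding locally_bounded_on_def by blast
  define g where "g v = sqrt (4 * K * norm (v - w) + lam * (norm (v - w))\<^sup>2)" for v
  have bound: "norm (S v - S w) \<le> g v" if "v \<in> W" "dist v w < 1" for v
  proof -
    have "v - w \<in> W"
      using \<open>subspace W\<close> that(1) w by (rule subspace_diff)
    then have "\<bar>A v (v - w)\<bar> \<le> K * norm (v - w)" "\<bar>A w (v - w)\<bar> \<le> K * norm (v - w)"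
      using K that w by (simp_all add: dist_norm)
    then have "(norm (S v - S w))\<^sup>2 \<le> 4 * K * norm (v - w) + lam * (norm (v - w))\<^sup>2"
      using dom[OF that(1) w] by (simp add: abs_le_iff)
    then show ?thesis
      unfolding g_def by (rule real_le_rsqrt)
  qed
  have "\<forall>\<^sub>F v in at w within W. norm (S v - S w) \<le> g v"
    unfolding eventually_at using bound zero_less_one by blast
  moreover have "continuous (at w within W) g"
    unfolding g_def by (intro continuous_intros)
  then have "(g \<longlongrightarrow> 0) (at w within W)"
    by (simp add: continuous_within g_def)
  ultimately have "((\<lambda>v. S v - S w) \<longlongrightarrow> 0) (at w within W)"
    by (rule Lim_null_comparison)
  then show "(S \<longlongrightarrow> S w) (at w within W)"
    by (rule LIM_zero_cancel)
qed

lemma monotone_directional_estimate: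
  fixes A :: "'a::real_normed_vector \<Rightarrow> 'a \<Rightarrow> real"
  assumes W: "subspace W" and lin: "\<And>u. u \<in> W \<Longrightarrow> linear_form_on W (A u)"
    and mono: "strongly_monotone_on W (- lam) A"
    and u: "u \<in> W" "u0 \<in> W" "z \<in> W"
  shows "t * A u z \<le> t * A (u0 + t *\<^sub>R z) z + (A u (u - u0) - A (u0 + t *\<^sub>R z) (u - u0))
           + lam * (norm (u - u0 - t *\<^sub>R z))\<^sup>2"
proof -
  define w where "w = u0 + t *\<^sub>R z"
  have w: "w \<in> W" and d: "u - u0 \<in> W"
    unfolding w_def using W u by (auto intro: subspace_add subspace_scale subspace_diff)
  have uw: "u - w = (- t) *\<^sub>R z + (u - u0)"
    unfolding w_def by (simp add: algebra_simps)
  have "A u (u - w) = - t * A u z + A u (u - u0)" "A w (u - w) = - t * A w z + A w (u - u0)"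
    unfolding uw using lin[OF u(1)] lin[OF w] u(3) d unfolding linear_form_on_def by blast+
  moreover have "- lam * (norm (u - w))\<^sup>2 \<le> A u (u - w) - A w (u - w)"
    using mono u(1) w unfolding strongly_monotone_on_def by blast
  moreover have "u - w = u - u0 - t *\<^sub>R z"
    unfolding w_def by simp
  ultimately show ?thesis
    unfolding w_def[symmetric] by (simp add: algebra_simps)
qed

lemma monotone_local_upper_bound:
  fixes A :: "'a::real_normed_vector \<Rightarrow> 'a \<Rightarrow> real"
  assumes W: "subspace W" and lin: "\<And>u. u \<in> W \<Longrightarrow> linear_form_on W (A u)"
    and mono: "strongly_monotone_on W (- lam) A" and "lam \<ge> 0"
    and K: "K \<ge> 0" "\<And>v y. v \<in> W \<Longrightarrow> norm (v - u0) \<le> 1 \<Longrightarrow> y \<in> W \<Longrightarrow> \<bar>A v y\<bar> \<le> K * norm y"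
    and u: "u \<in> W" "u0 \<in> W" "z \<in> W"
    and t: "0 < t" "t * (1 + norm z) \<le> 1" and \<eta>: "\<eta> \<le> 1" "norm (u - u0) \<le> t * \<eta>"
  shows "A u z \<le> A (u0 + t *\<^sub>R z) z + 2 * K * \<eta> + lam * t * (1 + norm z)\<^sup>2"
proof -
  define w where "w = u0 + t *\<^sub>R z"
  have "t * \<eta> \<le> t" "t * norm z \<le> t * (1 + norm z)" "t \<le> t * (1 + norm z)"
    using t(1) \<eta>(1) by (simp_all add: mult_left_le distrib_left)
  moreover have "norm (w - u0) = t * norm z"
    using t(1) unfolding w_def by simp
  ultimately have "norm (u - u0) \<le> 1" "norm (w - u0) \<le> 1"
    using t(2) \<eta>(2) by linarith+
  moreover have "u - u0 \<in> W" "w \<in> W"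
    using W u unfolding w_def by (auto intro: subspace_diff subspace_add subspace_scale)
  ultimately have "\<bar>A u (u - u0)\<bar> \<le> K * norm (u - u0)" "\<bar>A w (u - u0)\<bar> \<le> K * norm (u - u0)"
    using K(2) u(1) by auto
  moreover have "norm (u - u0 - t *\<^sub>R z) \<le> norm (u - u0) + t * norm z"
    using norm_triangle_ineq4[of "u - u0" "t *\<^sub>R z"] t(1) by simp
  then have "norm (u - u0 - t *\<^sub>R z) \<le> t * (1 + norm z)"
    using \<eta>(2) \<open>t * \<eta> \<le> t\<close> by (simp add: distrib_left)
  then have "lam * (norm (u - u0 - t *\<^sub>R z))\<^sup>2 \<le> lam * (t * (1 + norm z))\<^sup>2"
    using \<open>lam \<ge> 0\<close> by (simp add: mult_left_mono power_mono)
  ultimately have "t * A u z \<le> t * A w z + 2 * K * norm (u - u0) + lam * (t * (1 + norm z))\<^sup>2"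
    using monotone_directional_estimate[OF W lin mono u, of t] unfolding w_def by (simp add: abs_le_iff)
  also have "\<dots> \<le> t * (A w z + 2 * K * \<eta> + lam * t * (1 + norm z)\<^sup>2)"
    using \<eta>(2) K(1) by (simp add: algebra_simps power2_eq_square mult_left_mono)
  finally show ?thesis
    using t(1) unfolding w_def by (simp add: mult_le_cancel_left_pos)
qed

text \<open>Monotonicity between \<open>u\<close> and \<open>u0 + t z\<close> bounds \<open>A u z\<close> by \<open>A (u0 + t z) z\<close>
  up to errors of order \<open>norm (u - u0) / t\<close> and \<open>t\<close>; hemicontinuity controls
  \<open>A (u0 + t z) z - A u0 z\<close> for small \<open>t\<close>.\<close>

lemma hemicontinuous_upper_semicontinuous:
  fixes A :: "'a::real_normed_vector \<Rightarrow> 'a \<Rightarrow> real"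
  assumes W: "subspace W" and lin: "\<And>u. u \<in> W \<Longrightarrow> linear_form_on W (A u)"
    and hemi: "\<And>u z. u \<in> W \<Longrightarrow> z \<in> W \<Longrightarrow> continuous_on {0..1} (\<lambda>s. A (u + s *\<^sub>R z) z)"
    and mono: "strongly_monotone_on W (- lam) A" and lam: "lam \<ge> 0"
    and bdd: "locally_bounded_on W A"
    and u0: "u0 \<in> W" and z: "z \<in> W" and \<epsilon>: "\<epsilon> > 0"
  shows "\<exists>\<delta>>0. \<forall>u\<in>W. norm (u - u0) < \<delta> \<longrightarrow> A u z < A u0 z + \<epsilon>"
proof -
  obtain K where K: "K \<ge> 0" "\<And>v y. v \<in> W \<Longrightarrow> norm (v - u0) \<le> 1 \<Longrightarrow> y \<in> W \<Longrightarrow> \<bar>A v y\<bar> \<le> K * norm y"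
    using bdd u0 unfolding locally_bounded_on_def by blast
  have "(0::real) \<in> {0..1}" "\<epsilon> / 3 > 0"
    using \<epsilon> by simp_all
  then obtain d where d: "d > 0"
    "\<forall>s\<in>{0..1}. dist s 0 < d \<longrightarrow> dist (A (u0 + s *\<^sub>R z) z) (A (u0 + 0 *\<^sub>R z) z) < \<epsilon> / 3"
    using hemi[OF u0 z] unfolding continuous_on_iff by blast
  define Z where "Z = 1 + norm z"
  define t where "t = min (d / 2) (min (1 / Z) (\<epsilon> / (3 * (lam * Z\<^sup>2 + 1))))"
  have "Z \<ge> 1" "lam * Z\<^sup>2 + 1 > 0"
    unfolding Z_def using lam by (simp_all add: add_nonneg_pos)
  then have t: "0 < t" "t < d" "t \<le> 1 / Z" "t \<le> \<epsilon> / (3 * (lam * Z\<^sup>2 + 1))"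
    using d(1) \<epsilon> unfolding t_def by auto
  then have tZ: "t * Z \<le> 1" "lam * t * Z\<^sup>2 \<le> \<epsilon> / 3"
    using \<open>Z \<ge> 1\<close> \<open>lam * Z\<^sup>2 + 1 > 0\<close> by (simp_all add: pos_le_divide_eq algebra_simps)
  moreover have "1 / Z \<le> 1"
    using \<open>Z \<ge> 1\<close> by simp
  ultimately have "t \<le> 1"
    using t(3) by linarith
  then have "dist (A (u0 + t *\<^sub>R z) z) (A u0 z) < \<epsilon> / 3"
    using d(2) t(1,2) by simp
  then have Aw: "A (u0 + t *\<^sub>R z) z < A u0 z + \<epsilon> / 3"
    unfolding dist_real_def by linarith
  define \<eta> where "\<eta> = min 1 (\<epsilon> / (6 * K + 6))"
  have \<eta>: "0 < \<eta>" "\<eta> \<le> 1" "\<eta> \<le> \<epsilon> / (6 * K + 6)"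
    using K(1) \<epsilon> unfolding \<eta>_def by auto
  then have K\<eta>: "2 * K * \<eta> \<le> \<epsilon> / 3"
    using K(1) by (simp add: pos_le_divide_eq algebra_simps)
  show ?thesis
  proof (intro exI[of _ "t * \<eta>"] conjI ballI impI)
    fix u assume "u \<in> W" "norm (u - u0) < t * \<eta>"
    then have "A u z \<le> A (u0 + t *\<^sub>R z) z + 2 * K * \<eta> + lam * t * Z\<^sup>2"
      using monotone_local_upper_bound[OF W lin mono lam K \<open>u \<in> W\<close> u0 z t(1) tZ(1)[unfolded Z_def] \<eta>(2)]
      unfolding Z_def by simp
    then show "A u z < A u0 z + \<epsilon>"
      using Aw K\<eta> tZ(2) by linarith
  qed (use t(1) \<eta>(1) in simp)
qed

lemma hemicontinuous_continuous_on:
  fixes A :: "'a::real_normed_vector \<Rightarrow> 'a \<Rightarrow> real"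
  assumes W: "subspace W" and lin: "\<And>u. u \<in> W \<Longrightarrow> linear_form_on W (A u)"
    and hemi: "\<And>u z. u \<in> W \<Longrightarrow> z \<in> W \<Longrightarrow> continuous_on {0..1} (\<lambda>s. A (u + s *\<^sub>R z) z)"
    and mono: "strongly_monotone_on W (- lam) A" and lam: "lam \<ge> 0"
    and bdd: "locally_bounded_on W A" and z: "z \<in> W"
  shows "continuous_on W (\<lambda>u. A u z)"
  unfolding continuous_on_iff
proof (intro ballI allI impI)
  fix u0 and \<epsilon> :: real assume u0: "u0 \<in> W" and \<epsilon>: "\<epsilon> > 0"
  have "- z \<in> W"
    using W z by (rule subspace_neg)
  obtain d1 where d1: "d1 > 0" "\<forall>u\<in>W. norm (u - u0) < d1 \<longrightarrow> A u z < A u0 z + \<epsilon>"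
    using hemicontinuous_upper_semicontinuous[OF W lin hemi mono lam bdd u0 z \<epsilon>] by blast
  obtain d2 where d2: "d2 > 0" "\<forall>u\<in>W. norm (u - u0) < d2 \<longrightarrow> A u (- z) < A u0 (- z) + \<epsilon>"
    using hemicontinuous_upper_semicontinuous[OF W lin hemi mono lam bdd u0 \<open>- z \<in> W\<close> \<epsilon>] by blast
  show "\<exists>\<delta>>0. \<forall>u\<in>W. dist u u0 < \<delta> \<longrightarrow> dist (A u z) (A u0 z) < \<epsilon>"
  proof (intro exI[of _ "min d1 d2"] conjI ballI impI)
    fix u assume "u \<in> W" "dist u u0 < min d1 d2"
    then have "A u z < A u0 z + \<epsilon>" "A u (- z) < A u0 (- z) + \<epsilon>"
      using d1 d2 by (auto simp: dist_norm)
    then show "dist (A u z) (A u0 z) < \<epsilon>"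
      using linear_form_on_uminus[OF lin W z] \<open>u \<in> W\<close> u0
      by (simp add: dist_real_def abs_less_iff)
  qed (use d1 d2 in simp)
qed

lemma banach_subspaceD:
  assumes "banach_subspace V nV"
  shows "subspace V" "\<And>v. v \<in> V \<Longrightarrow> 0 \<le> nV v"
    "\<And>v c. v \<in> V \<Longrightarrow> nV (c *\<^sub>R v) = \<bar>c\<bar> * nV v"
    "\<And>v w. v \<in> V \<Longrightarrow> w \<in> V \<Longrightarrow> nV (v + w) \<le> nV v + nV w"
  using assms unfolding banach_subspace_def by auto

lemma banach_subspace_sum_le:
  assumes V: "banach_subspace V nV" and "finite S" "S \<subseteq> V"
  shows "nV (\<Sum>e\<in>S. c e *\<^sub>R e) \<le> (\<Sum>e\<in>S. \<bar>c e\<bar> * nV e)"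
  using assms(2,3)
proof (induction S rule: finite_induct)
  case empty
  show ?case
    using banach_subspaceD(3)[OF V subspace_0[OF banach_subspaceD(1)[OF V]], of 0] by simp
next
  case (insert a S)
  have "(\<Sum>e\<in>S. c e *\<^sub>R e) \<in> V" "c a *\<^sub>R a \<in> V"
    using insert.prems banach_subspaceD(1)[OF V] by (auto intro: subspace_sum subspace_scale)
  then have "nV (c a *\<^sub>R a + (\<Sum>e\<in>S. c e *\<^sub>R e)) \<le> nV (c a *\<^sub>R a) + nV (\<Sum>e\<in>S. c e *\<^sub>R e)"
    by (rule banach_subspaceD(4)[OF V, rotated])
  moreover have "nV (c a *\<^sub>R a) = \<bar>c a\<bar> * nV a"
    using insert.prems by (simp add: banach_subspaceD(3)[OF V])
  ultimately show ?case
    using insert by simp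
qed

lemma banach_subspace_le_norm_on_span:
  assumes V: "banach_subspace V nV" and E: "finite E" "orthonormal_set E" "E \<subseteq> V"
    and x: "x \<in> span E"
  shows "nV x \<le> (\<Sum>e\<in>E. nV e) * norm x"
proof -
  have "nV x = nV (\<Sum>e\<in>E. inner x e *\<^sub>R e)"
    using orthonormal_expansion[OF E(1,2) x] by simp
  also have "\<dots> \<le> (\<Sum>e\<in>E. \<bar>inner x e\<bar> * nV e)"
    by (rule banach_subspace_sum_le[OF V E(1,3)])
  also have "\<dots> \<le> (\<Sum>e\<in>E. norm x * nV e)"
  proof (rule sum_mono)
    fix e assume "e \<in> E"
    then have "\<bar>inner x e\<bar> \<le> norm x" "0 \<le> nV e"
      using Cauchy_Schwarz_ineq2[of x e] E banach_subspaceD(2)[OF V]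
      unfolding orthonormal_set_def by auto
    then show "\<bar>inner x e\<bar> * nV e \<le> norm x * nV e"
      by (rule mult_right_mono)
  qed
  finally show ?thesis
    by (simp add: sum_distrib_left mult.commute)
qed

lemma locally_bounded_on_growth:
  assumes V: "banach_subspace V nV" and E: "finite E" "orthonormal_set E" "span E \<subseteq> V"
    and growth: "\<And>u v. u \<in> V \<Longrightarrow> v \<in> V \<Longrightarrow> \<bar>A u v\<bar> \<le> C * (nV u + 1) powr q * nV v"
    and "q \<ge> 0"
  shows "locally_bounded_on (span E) A"
  unfolding locally_bounded_on_def
proof
  fix w assume w: "w \<in> span E"
  define L where "L = (\<Sum>e\<in>E. nV e)"
  have "E \<subseteq> V"
    using E(3) span_superset by blast
  have nV: "0 \<le> nV x" "nV x \<le> L * norm x" if "x \<in> span E" for x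
    using banach_subspaceD(2)[OF V] that E(3) banach_subspace_le_norm_on_span[OF V E(1,2) \<open>E \<subseteq> V\<close> that]
    unfolding L_def by auto
  have "0 \<le> L"
    unfolding L_def using \<open>E \<subseteq> V\<close> banach_subspaceD(2)[OF V] by (simp add: subset_eq sum_nonneg)
  show "\<exists>K\<ge>0. \<forall>v\<in>span E. norm (v - w) \<le> 1 \<longrightarrow> (\<forall>y\<in>span E. \<bar>A v y\<bar> \<le> K * norm y)"
  proof (intro exI[of _ "\<bar>C\<bar> * (nV w + L + 1) powr q * L"] conjI ballI impI)
    show "0 \<le> \<bar>C\<bar> * (nV w + L + 1) powr q * L"
      using \<open>0 \<le> L\<close> by simp
    fix v y assume v: "v \<in> span E" "norm (v - w) \<le> 1" and y: "y \<in> span E"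
    have vw: "v - w \<in> span E"
      using v(1) w by (rule span_diff)
    have "nV (w + (v - w)) \<le> nV w + nV (v - w)"
      using banach_subspaceD(4)[OF V] w vw E(3) by blast
    also have "nV (v - w) \<le> L"
      using nV(2)[OF vw] mult_left_le[OF v(2) \<open>0 \<le> L\<close>] by linarith
    finally have "(nV v + 1) powr q \<le> (nV w + L + 1) powr q"
      using nV(1)[OF v(1)] \<open>q \<ge> 0\<close> by (intro powr_mono2) auto
    have "\<bar>A v y\<bar> \<le> C * (nV v + 1) powr q * nV y"
      using growth v(1) y E(3) by blast
    also have "\<dots> \<le> \<bar>C\<bar> * (nV v + 1) powr q * nV y"
      using nV(1)[OF y] by (intro mult_right_mono) auto
    also have "\<dots> \<le> \<bar>C\<bar> * (nV w + L + 1) powr q * nV y"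
      using nV(1)[OF y] \<open>(nV v + 1) powr q \<le> _\<close> by (intro mult_right_mono mult_left_mono) auto
    also have "\<dots> \<le> \<bar>C\<bar> * (nV w + L + 1) powr q * (L * norm y)"
      using nV(2)[OF y] by (intro mult_left_mono) auto
    finally show "\<bar>A v y\<bar> \<le> \<bar>C\<bar> * (nV w + L + 1) powr q * L * norm y"
      by (simp add: mult.assoc)
  qed
qed

lemma norm_diff_power2_le:
  fixes x y :: "'a::real_inner"
  shows "(norm (x - y))\<^sup>2 \<le> 2 * (norm x)\<^sup>2 + 2 * (norm y)\<^sup>2"
proof -
  have "(norm (x - y))\<^sup>2 + (norm (x + y))\<^sup>2 = 2 * (norm x)\<^sup>2 + 2 * (norm y)\<^sup>2"
    by (simp add: power2_norm_eq_inner inner_diff inner_add inner_commute)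
  then show ?thesis
    by (smt (verit) zero_le_power2)
qed

lemma hs_norm2_diff_ge:
  fixes s t :: "nat \<Rightarrow> 'a::real_inner"
  assumes "summable (\<lambda>i. (norm (s i))\<^sup>2)" "summable (\<lambda>i. (norm (t i))\<^sup>2)"
  shows "(norm (s j - t j))\<^sup>2 \<le> hs_norm2 (\<lambda>i. s i - t i)"
proof -
  have "summable (\<lambda>i. 2 * (norm (s i))\<^sup>2 + 2 * (norm (t i))\<^sup>2)"
    using assms by (intro summable_add summable_mult)
  then have "summable (\<lambda>i. (norm (s i - t i))\<^sup>2)"
    by (rule summable_comparison_test'[where N = 0]) (simp add: norm_diff_power2_le)
  then have "(\<Sum>i\<in>{j}. (norm (s i - t i))\<^sup>2) \<le> (\<Sum>i. (norm (s i - t i))\<^sup>2)"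
    by (rule sum_le_suminf) auto
  then show ?thesis
    unfolding hs_norm2_def by simp
qed

lemma operator_regularity_on_span:
  fixes A :: "'h::{real_inner,complete_space} \<Rightarrow> 'h \<Rightarrow> real" and sig :: "'h \<Rightarrow> nat \<Rightarrow> 'h"
  assumes V: "banach_subspace V nV" and E: "finite E" "orthonormal_set E" "span E \<subseteq> V"
    and lin: "\<And>u. u \<in> V \<Longrightarrow> linear_form_on V (A u)"
    and growth: "\<And>u v. u \<in> V \<Longrightarrow> v \<in> V \<Longrightarrow> \<bar>A u v\<bar> \<le> C * (nV u + 1) powr q * nV v" and "q \<ge> 0"
    and hemi: "\<And>v w z. v \<in> V \<Longrightarrow> w \<in> V \<Longrightarrow> z \<in> V \<Longrightarrow>
      continuous_on {0..1} (\<lambda>\<epsilon>. A (w + \<epsilon> *\<^sub>R z) v)"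
    and sig_HS: "\<And>v. v \<in> V \<Longrightarrow> summable (\<lambda>i. (norm (sig v i))\<^sup>2)"
    and "lam \<ge> 0"
    and mono: "\<And>v w. v \<in> V \<Longrightarrow> w \<in> V \<Longrightarrow>
      hs_norm2 (\<lambda>i. sig v i - sig w i) \<le> 2 * (A v (v - w) - A w (v - w)) + lam * (norm (v - w))\<^sup>2"
  shows "\<And>u. u \<in> span E \<Longrightarrow> linear_form_on (span E) (A u)"
    and "strongly_monotone_on (span E) (- (lam / 2)) A"
    and "\<And>v. v \<in> span E \<Longrightarrow> continuous_on (span E) (\<lambda>u. A u v)"
    and "\<And>i. continuous_on (span E) (\<lambda>x. sig x i)"
proof -
  show lin': "linear_form_on (span E) (A u)" if "u \<in> span E" for u
    using lin that E(3) by (blast intro: linear_form_on_subset)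
  have dom: "(norm (sig v i - sig w i))\<^sup>2 \<le> 2 * (A v (v - w) - A w (v - w)) + lam * (norm (v - w))\<^sup>2"
    if "v \<in> span E" "w \<in> span E" for v w i
    using hs_norm2_diff_ge[OF sig_HS sig_HS] mono that E(3) by (meson order.trans subsetD)
  show mono': "strongly_monotone_on (span E) (- (lam / 2)) A"
    unfolding strongly_monotone_on_def
  proof (intro ballI)
    fix v w assume "v \<in> span E" "w \<in> span E"
    then have "0 \<le> 2 * (A v (v - w) - A w (v - w)) + lam * (norm (v - w))\<^sup>2"
      using dom[of v w 0] by (meson order.trans zero_le_power2)
    then show "- (lam / 2) * (norm (v - w))\<^sup>2 \<le> A v (v - w) - A w (v - w)"
      by simp
  qed
  have bdd: "locally_bounded_on (span E) A"
    by (rule locally_bounded_on_growth[OF V E growth \<open>q \<ge> 0\<close>])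
  show "continuous_on (span E) (\<lambda>u. A u v)" if "v \<in> span E" for v
    using hemi E(3) \<open>lam \<ge> 0\<close> that
    by (intro hemicontinuous_continuous_on[OF subspace_span lin' _ mono' _ bdd]) auto
  show "continuous_on (span E) (\<lambda>x. sig x i)" for i
    using dom bdd by (intro continuous_on_dominated_by_monotone[where A = A]) auto
qed

section \<open>Measurability and the averaged right-hand side\<close>

lemma filtration_measurable_mono:
  assumes "filtration \<Omega> F" "s \<le> t" "f \<in> measurable (F s) N"
  shows "f \<in> measurable (F t) N"
proof (rule measurable_from_subalg[OF _ assms(3)])
  show "subalgebra (F t) (F s)"
    using filtration.sets_F_mono[OF assms(1,2)] filtration.space_F[OF assms(1)]
    unfolding subalgebra_def by simp
qed

lemma borel_measurable_continuous_on_compose: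
  assumes "continuous_on S g" "f \<in> borel_measurable M" "\<And>\<omega>. \<omega> \<in> space M \<Longrightarrow> f \<omega> \<in> S"
  shows "(\<lambda>\<omega>. g (f \<omega>)) \<in> borel_measurable M"
  using measurable_compose[OF measurable_restrict_space2 borel_measurable_continuous_on_restrict[OF assms(1)]]
    assms(2,3) by blast

text \<open>The target space need not be second countable, so the sum is measured through its
  coordinate vector in \<open>nat \<Rightarrow> real\<close>.\<close>

lemma borel_measurable_finite_combination:
  fixes E :: "'a::real_normed_vector set"
  assumes "finite E" "\<And>e. e \<in> E \<Longrightarrow> (\<lambda>\<omega>. c e \<omega>) \<in> borel_measurable M"
  shows "(\<lambda>\<omega>. \<Sum>e\<in>E. c e \<omega> *\<^sub>R e) \<in> borel_measurable M"
proof -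
  obtain es where es: "distinct es" "set es = E"
    using finite_distinct_list[OF assms(1)] by blast
  define k where "k = length es"
  define coords where "coords \<omega> j = (if j < k then c (es ! j) \<omega> else 0)" for \<omega> j
  have "coords \<in> borel_measurable M"
  proof (rule measurable_coordinatewise_then_product)
    show "(\<lambda>\<omega>. coords \<omega> j) \<in> borel_measurable M" for j
      unfolding coords_def k_def using es(2) assms(2) nth_mem[of j es] by (cases "j < length es") auto
  qed
  moreover have "continuous_on UNIV (\<lambda>x::nat \<Rightarrow> real. \<Sum>j<k. x j *\<^sub>R es ! j)"
    by (intro continuous_intros continuous_on_product_coordinates)
  ultimately have "(\<lambda>\<omega>. \<Sum>j<k. coords \<omega> j *\<^sub>R es ! j) \<in> borel_measurable M"
    by (rule borel_measurable_continuous_on[rotated])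
  moreover have "(\<Sum>j<k. coords \<omega> j *\<^sub>R es ! j) = (\<Sum>e\<in>E. c e \<omega> *\<^sub>R e)" for \<omega>
    unfolding coords_def k_def
    using sum.reindex_bij_betw[OF bij_betw_nth[OF es(1) refl es(2)[symmetric]], of "\<lambda>e. c e \<omega> *\<^sub>R e"]
    by simp
  ultimately show ?thesis
    by simp
qed

lemma b_avg_eq_set_integral:
  assumes "\<tau> \<ge> 0"
  shows "b_avg b \<tau> \<omega> n v = 1 / \<tau> * (LINT s:{real (n - 1) * \<tau><..<real n * \<tau>}|lborel. b \<omega> s v)"
proof -
  have "ereal (real (n - 1) * \<tau>) \<le> ereal (real n * \<tau>)"
    using assms by (simp add: mult_right_mono)
  then show ?thesis
    unfolding b_avg_def by (simp add: interval_lebesgue_integral_le_eq)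
qed

lemma set_integrable_bounded_restrict:
  fixes g :: "real \<Rightarrow> real"
  assumes "g \<in> borel_measurable (restrict_space lborel {0..T})" "\<And>s. s \<in> {0..T} \<Longrightarrow> \<bar>g s\<bar> \<le> B"
    and "S \<subseteq> {0..T}" "S \<in> sets lborel"
  shows "set_integrable lborel S g"
proof -
  have "(\<lambda>s. if s \<in> {0..T} then g s else 0) \<in> borel_measurable lborel"
    using assms(1) by (subst (asm) measurable_restrict_space_iff) auto
  moreover have "emeasure lborel S \<le> emeasure lborel {0..T}"
    using assms(3) by (rule emeasure_mono) simp
  then have "emeasure lborel S < \<infinity>"
    by (simp add: emeasure_lborel_Icc_eq order.strict_trans1)
  ultimately have "integrable lborel (\<lambda>s. indicator S s *\<^sub>R (if s \<in> {0..T} then g s else 0))"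
    using assms by (intro integrableI_bounded_set_indicator[where B = B]) (auto simp: subset_eq)
  moreover have "(\<lambda>s. indicator S s *\<^sub>R (if s \<in> {0..T} then g s else 0)) = (\<lambda>s. indicator S s *\<^sub>R g s)"
    using assms(3) by (intro ext) (auto simp: indicator_def)
  ultimately show ?thesis
    unfolding set_integrable_def by simp
qed

lemma b_avg_linear_form_on:
  assumes "\<tau> \<ge> 0"
    and int: "\<And>v. v \<in> V \<Longrightarrow> set_integrable lborel {real (n - 1) * \<tau><..<real n * \<tau>} (\<lambda>s. b \<omega> s v)"
    and lin: "\<And>s. s \<in> {real (n - 1) * \<tau><..<real n * \<tau>} \<Longrightarrow> linear_form_on V (b \<omega> s)"
  shows "linear_form_on V (b_avg b \<tau> \<omega> n)"
  unfolding linear_form_on_def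
proof (intro ballI allI)
  fix x y c assume xy: "x \<in> V" "y \<in> V"
  let ?I = "{real (n - 1) * \<tau><..<real n * \<tau>}"
  have "(LINT s:?I|lborel. b \<omega> s (c *\<^sub>R x + y)) = (LINT s:?I|lborel. c * b \<omega> s x + b \<omega> s y)"
    using lin xy unfolding linear_form_on_def by (intro set_lebesgue_integral_cong) auto
  also have "\<dots> = c * (LINT s:?I|lborel. b \<omega> s x) + (LINT s:?I|lborel. b \<omega> s y)"
    using int[OF xy(1)] int[OF xy(2)] by (subst set_integral_add(2)) auto
  finally show "b_avg b \<tau> \<omega> n (c *\<^sub>R x + y) = c * b_avg b \<tau> \<omega> n x + b_avg b \<tau> \<omega> n y"
    unfolding b_avg_eq_set_integral[OF assms(1)] by (simp add: algebra_simps)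
qed

lemma b_avg_linear_form_on_progressive:
  assumes "\<tau> > 0" "n \<in> {1..N}" "T = real N * \<tau>" "filtration (space M) F" "\<omega> \<in> space M" "W \<subseteq> V"
    and lin: "\<And>\<omega> t x y c. \<omega> \<in> space M \<Longrightarrow> t \<in> {0..T} \<Longrightarrow> x \<in> V \<Longrightarrow> y \<in> V \<Longrightarrow>
      b \<omega> t (c *\<^sub>R x + y) = c * b \<omega> t x + b \<omega> t y"
    and bdd: "\<exists>Cb. \<forall>\<omega>\<in>space M. \<forall>t\<in>{0..T}. \<forall>v\<in>V. \<bar>b \<omega> t v\<bar> \<le> Cb * nV v"
    and prog: "\<And>t v. t \<in> {0..T} \<Longrightarrow> v \<in> V \<Longrightarrow>
      (\<lambda>(\<omega>, s). b \<omega> s v) \<in> borel_measurable (F t \<Otimes>\<^sub>M restrict_space lborel {0..t})"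
  shows "linear_form_on W (b_avg b \<tau> \<omega> n)"
proof (rule linear_form_on_subset[OF b_avg_linear_form_on \<open>W \<subseteq> V\<close>])
  let ?I = "{real (n - 1) * \<tau><..<real n * \<tau>}"
  obtain Cb where Cb: "\<And>s v. s \<in> {0..T} \<Longrightarrow> v \<in> V \<Longrightarrow> \<bar>b \<omega> s v\<bar> \<le> Cb * nV v"
    using bdd \<open>\<omega> \<in> space M\<close> by blast
  have "real n * \<tau> \<le> T" "0 \<le> real (n - 1) * \<tau>"
    using assms(1-3) by (simp_all add: mult_right_mono)
  then have I: "?I \<subseteq> {0..T}"
    by auto
  have "\<omega> \<in> space (F T)" "T \<in> {0..T}"
    using assms(1,3,4,5) filtration.space_F by auto
  then show "set_integrable lborel ?I (\<lambda>s. b \<omega> s v)" if "v \<in> V" for v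
    using measurable_Pair2[OF prog[OF _ that]] Cb[OF _ that] I
    by (intro set_integrable_bounded_restrict[where T = T]) auto
  show "linear_form_on V (b \<omega> s)" if "s \<in> ?I" for s
    using lin \<open>\<omega> \<in> space M\<close> I that unfolding linear_form_on_def by blast
qed (use assms(1) in simp)

lemma b_avg_measurable:
  assumes prog: "(\<lambda>(\<omega>, s). b \<omega> s v) \<in> borel_measurable (F t \<Otimes>\<^sub>M restrict_space lborel {0..t})"
    and "\<tau> \<ge> 0" "t = real n * \<tau>"
  shows "(\<lambda>\<omega>. b_avg b \<tau> \<omega> n v) \<in> borel_measurable (F t)"
proof -
  let ?R = "restrict_space lborel {0..t}"
  define I where "I = {real (n - 1) * \<tau><..<t}"
  interpret R: sigma_finite_measure ?R
    by (rule sigma_finite_measure_restrict_space[OF lborel.sigma_finite_measure_axioms]) simp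
  have "0 \<le> real (n - 1) * \<tau>"
    using assms(2) by simp
  then have "I \<subseteq> {0..t}"
    unfolding I_def by auto
  have eq: "b_avg b \<tau> \<omega> n v = 1 / \<tau> * integral\<^sup>L ?R (\<lambda>s. indicator I s * b \<omega> s v)" for \<omega>
  proof -
    have "integral\<^sup>L ?R (\<lambda>s. indicator I s * b \<omega> s v)
        = integral\<^sup>L lborel (\<lambda>s. indicator {0..t} s *\<^sub>R (indicator I s * b \<omega> s v))"
      by (rule integral_restrict_space) simp
    also have "\<dots> = (LINT s:I|lborel. b \<omega> s v)"
      unfolding set_lebesgue_integral_def using \<open>I \<subseteq> {0..t}\<close>
      by (intro Bochner_Integration.integral_cong) (auto simp: indicator_def)
    finally show ?thesis
      using b_avg_eq_set_integral[OF assms(2)] assms(3) unfolding I_def by simp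
  qed
  have "(\<lambda>p. indicator I (snd p) :: real) \<in> borel_measurable (F t \<Otimes>\<^sub>M ?R)"
    unfolding I_def by (intro measurable_compose[OF measurable_snd] measurable_restrict_space1) simp
  then have "(\<lambda>p. indicator I (snd p) * (\<lambda>(\<omega>, s). b \<omega> s v) p) \<in> borel_measurable (F t \<Otimes>\<^sub>M ?R)"
    using prog by (rule borel_measurable_times)
  then have "(\<lambda>(\<omega>, s). indicator I s * b \<omega> s v) \<in> borel_measurable (F t \<Otimes>\<^sub>M ?R)"
    by (simp add: case_prod_beta')
  then have "(\<lambda>\<omega>. integral\<^sup>L ?R (\<lambda>s. indicator I s * b \<omega> s v)) \<in> borel_measurable (F t)"
    by (intro R.borel_measurable_lebesgue_integral) simp
  then show ?thesis
    unfolding eq by simp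
qed

lemma dBeta_measurable:
  assumes "filtration \<Omega> F" "\<And>t. t \<ge> 0 \<Longrightarrow> \<beta> i t \<in> borel_measurable (F t)" "\<tau> \<ge> 0"
  shows "dBeta \<beta> \<tau> n i \<in> borel_measurable (F (real n * \<tau>))"
proof (cases "n \<le> 1")
  case False
  have "real (n - 1) * \<tau> \<le> real n * \<tau>"
    using assms(3) by (simp add: mult_right_mono)
  then have "\<beta> i (real (n - 1) * \<tau>) \<in> borel_measurable (F (real n * \<tau>))"
    by (rule filtration_measurable_mono[OF assms(1)]) (use assms(2,3) in simp)
  moreover have "\<beta> i (real n * \<tau>) \<in> borel_measurable (F (real n * \<tau>))"
    using assms(2,3) by simp
  ultimately show ?thesis
    unfolding dBeta_def using False by (simp add: borel_measurable_diff)
qed (simp add: dBeta_def[abs_def])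

section \<open>The fully discrete scheme\<close>

definition step_functional ::
  "('w \<Rightarrow> real \<Rightarrow> 'h \<Rightarrow> real) \<Rightarrow> ('h \<Rightarrow> nat \<Rightarrow> 'h::real_inner) \<Rightarrow> (nat \<Rightarrow> real \<Rightarrow> 'w \<Rightarrow> real) \<Rightarrow>
   real \<Rightarrow> nat \<Rightarrow> nat \<Rightarrow> 'h \<Rightarrow> 'w \<Rightarrow> 'h \<Rightarrow> real" where
  "step_functional b sig \<beta> \<tau> r n x \<omega> v =
     inner x v + \<tau> * b_avg b \<tau> \<omega> n v + (\<Sum>i<r. dBeta \<beta> \<tau> n i \<omega> * inner (sig x i) v)"

lemma discrete_solution_iff_step:
  "discrete_solution M Vh A b sig \<beta> N \<tau> r u0 u \<longleftrightarrow>
     (\<forall>\<omega>\<in>space M. u 0 \<omega> = u0 \<omega>) \<and>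
     (\<forall>n\<in>{1..N}. \<forall>\<omega>\<in>space M. u n \<omega> \<in> Vh \<and>
        (\<forall>v\<in>Vh. inner (u n \<omega>) v + \<tau> * A (u n \<omega>) v = step_functional b sig \<beta> \<tau> r n (u (n - 1) \<omega>) \<omega> v))"
  unfolding discrete_solution_def step_functional_def by (simp add: inner_diff_left algebra_simps)

lemma step_functional_linear:
  assumes "linear_form_on W (b_avg b \<tau> \<omega> n)"
  shows "linear_form_on W (step_functional b sig \<beta> \<tau> r n x \<omega>)"
  using assms unfolding linear_form_on_def step_functional_def
  by (simp add: inner_add_right algebra_simps sum.distrib sum_distrib_left)

lemma step_representer_measurable:
  fixes E :: "'h::real_inner set"
  assumes "finite E" "E \<subseteq> W"
    and "x \<in> borel_measurable N" "\<And>\<omega>. \<omega> \<in> space N \<Longrightarrow> x \<omega> \<in> W"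
    and "\<And>i. continuous_on W (\<lambda>y. sig y i)"
    and "\<And>v. v \<in> W \<Longrightarrow> (\<lambda>\<omega>. b_avg b \<tau> \<omega> n v) \<in> borel_measurable N"
    and "\<And>i. dBeta \<beta> \<tau> n i \<in> borel_measurable N"
  shows "(\<lambda>\<omega>. \<Sum>e\<in>E. step_functional b sig \<beta> \<tau> r n (x \<omega>) \<omega> e *\<^sub>R e) \<in> borel_measurable N"
proof -
  have "(\<lambda>\<omega>. inner (x \<omega>) v) \<in> borel_measurable N" for v
    using assms(3) by (intro borel_measurable_continuous_on[of "\<lambda>y. inner y v"]) (auto intro: continuous_intros)
  moreover have "(\<lambda>\<omega>. inner (sig (x \<omega>) i) v) \<in> borel_measurable N" for i v
  proof (rule borel_measurable_continuous_on_compose[OF _ assms(3,4)])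
    show "continuous_on W (\<lambda>y. inner (sig y i) v)"
      using assms(5) by (intro continuous_intros)
  qed
  ultimately have "(\<lambda>\<omega>. step_functional b sig \<beta> \<tau> r n (x \<omega>) \<omega> e) \<in> borel_measurable N" if "e \<in> E" for e
    unfolding step_functional_def using assms(2,6,7) that
    by (intro borel_measurable_add borel_measurable_times borel_measurable_sum borel_measurable_const) auto
  then show ?thesis
    using assms(1) by (rule borel_measurable_finite_combination[rotated])
qed

lemma discrete_solution_unique:
  assumes mono: "strongly_monotone_on Vh (- lam) A" and "\<tau> \<ge> 0" "\<tau> * lam < 1" "subspace Vh"
    and u: "discrete_solution M Vh A b sig \<beta> N \<tau> r u0 u"
    and u': "discrete_solution M Vh A b sig \<beta> N \<tau> r u0 u'"
    and "n \<le> N" "\<omega> \<in> space M"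
  shows "u n \<omega> = u' n \<omega>"
proof -
  have mono': "strongly_monotone_on Vh (1 - \<tau> * lam) (\<lambda>u v. inner u v + \<tau> * A u v)"
    using strongly_monotone_on_inner_plus[OF mono \<open>\<tau> \<ge> 0\<close>] by simp
  have "0 < 1 - \<tau> * lam"
    using \<open>\<tau> * lam < 1\<close> by simp
  show ?thesis
    using \<open>n \<le> N\<close>
  proof (induction n)
    case 0
    then show ?case
      using u u' \<open>\<omega> \<in> space M\<close> unfolding discrete_solution_def by simp
  next
    case (Suc m)
    then have "Suc m \<in> {1..N}" "u m \<omega> = u' m \<omega>"
      by auto
    then show ?case
      using u u' \<open>\<omega> \<in> space M\<close> unfolding discrete_solution_iff_step
      by (intro strongly_monotone_on_inj[OF mono' \<open>0 < 1 - \<tau> * lam\<close> \<open>subspace Vh\<close>]) auto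
  qed
qed

lemma discrete_solution_exists:
  fixes E :: "'h::real_inner set"
  assumes E: "finite E" "orthonormal_set E" "Vh = span E" and "\<tau> \<ge> 0" "\<tau> * lam < 1"
    and A: "\<And>u. u \<in> Vh \<Longrightarrow> linear_form_on Vh (A u)" "strongly_monotone_on Vh (- lam) A"
      "\<And>v. v \<in> Vh \<Longrightarrow> continuous_on Vh (\<lambda>u. A u v)"
    and b_lin: "\<And>\<omega> n. \<omega> \<in> space M \<Longrightarrow> n \<in> {1..N} \<Longrightarrow> linear_form_on Vh (b_avg b \<tau> \<omega> n)"
    and b_meas: "\<And>n v. n \<in> {1..N} \<Longrightarrow> v \<in> Vh \<Longrightarrow> (\<lambda>\<omega>. b_avg b \<tau> \<omega> n v) \<in> borel_measurable (F (real n * \<tau>))"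
    and dB_meas: "\<And>n i. n \<in> {1..N} \<Longrightarrow> dBeta \<beta> \<tau> n i \<in> borel_measurable (F (real n * \<tau>))"
    and sig: "\<And>i. continuous_on Vh (\<lambda>x. sig x i)"
    and F: "filtration (space M) F"
    and u0: "u0 \<in> borel_measurable (F 0)" "\<And>\<omega>. \<omega> \<in> space M \<Longrightarrow> u0 \<omega> \<in> Vh"
  shows "\<exists>u. discrete_solution M Vh A b sig \<beta> N \<tau> r u0 u \<and>
             (\<forall>n\<in>{1..N}. u n \<in> borel_measurable (F (real n * \<tau>)))"
proof -
  obtain Sol where Sol: "continuous_on UNIV Sol" "\<And>y. Sol y \<in> Vh"
    "\<And>y v. v \<in> Vh \<Longrightarrow> inner (Sol y) v + \<tau> * A (Sol y) v = inner y v"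
    using implicit_step_solution_operator[OF E(1,2) A[unfolded E(3)] \<open>\<tau> \<ge> 0\<close> \<open>\<tau> * lam < 1\<close>]
    unfolding E(3) by blast
  let ?y = "\<lambda>n x \<omega>. \<Sum>e\<in>E. step_functional b sig \<beta> \<tau> r n x \<omega> e *\<^sub>R e"
  define u where "u = rec_nat u0 (\<lambda>m um \<omega>. Sol (?y (Suc m) (um \<omega>) \<omega>))"
  have u_simps: "u 0 = u0" "u (Suc m) = (\<lambda>\<omega>. Sol (?y (Suc m) (u m \<omega>) \<omega>))" for m
    unfolding u_def by simp_all
  have u_Vh: "u m \<omega> \<in> Vh" if "\<omega> \<in> space M" for m \<omega>
    using that u0(2) Sol(2) by (cases m) (simp_all add: u_simps)
  have "discrete_solution M Vh A b sig \<beta> N \<tau> r u0 u"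
    unfolding discrete_solution_iff_step
  proof (intro conjI ballI)
    fix n \<omega> v assume n: "n \<in> {1..N}" and \<omega>: "\<omega> \<in> space M" and v: "v \<in> Vh"
    then obtain m where m: "n = Suc m"
      by (cases n) auto
    have "inner (u n \<omega>) v + \<tau> * A (u n \<omega>) v = inner (?y n (u m \<omega>) \<omega>) v"
      using Sol(3)[OF v] m by (simp add: u_simps)
    also have "\<dots> = step_functional b sig \<beta> \<tau> r n (u (n - 1) \<omega>) \<omega> v"
      using orthonormal_representer[OF E(1,2) step_functional_linear[OF b_lin[OF \<omega> n, unfolded E(3)]]]
        v E(3) m by simp
    finally show "inner (u n \<omega>) v + \<tau> * A (u n \<omega>) v = step_functional b sig \<beta> \<tau> r n (u (n - 1) \<omega>) \<omega> v" .
  qed (simp_all add: u_simps u_Vh)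
  moreover have "u n \<in> borel_measurable (F (real n * \<tau>))" if "n \<le> N" for n
    using that
  proof (induction n)
    case 0
    then show ?case
      using u0(1) by (simp add: u_simps)
  next
    case (Suc m)
    let ?t = "real (Suc m) * \<tau>"
    have n: "Suc m \<in> {1..N}"
      using Suc.prems by simp
    have "real m * \<tau> \<le> ?t"
      using \<open>\<tau> \<ge> 0\<close> by (simp add: mult_right_mono)
    then have "u m \<in> borel_measurable (F ?t)"
      using Suc by (intro filtration_measurable_mono[OF F _ Suc.IH]) auto
    then have "(\<lambda>\<omega>. ?y (Suc m) (u m \<omega>) \<omega>) \<in> borel_measurable (F ?t)"
      using u_Vh filtration.space_F[OF F] sig b_meas[OF n] dB_meas[OF n] E(1,3)
      by (intro step_representer_measurable[where W = Vh]) (auto simp: span_base)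
    then show ?case
      unfolding u_simps by (rule borel_measurable_continuous_on[OF Sol(1)])
  qed
  ultimately show ?thesis
    by auto
qed

theorem lemma3p2:
  fixes V Vh :: "'h::{real_inner,complete_space} set"
    and nV :: "'h \<Rightarrow> real"
    and A :: "'h \<Rightarrow> 'h \<Rightarrow> real"
    and sig :: "'h \<Rightarrow> nat \<Rightarrow> 'h"
    and b :: "'w \<Rightarrow> real \<Rightarrow> 'h \<Rightarrow> real"
    and M :: "'w measure" and F :: "real \<Rightarrow> 'w measure"
    and \<beta> :: "nat \<Rightarrow> real \<Rightarrow> 'w \<Rightarrow> real"
    and u0 :: "'w \<Rightarrow> 'h"
    and p T \<mu> lamD lamA \<kappa> lamB C \<tau> :: real and N r :: nat
  assumes V: "banach_subspace V nV"
    and p: "p > 1" and T: "T > 0"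
    \<comment> \<open>A : V -> V*, i.e. A u is linear and bounded on V; (iv) growth bound\<close>
    and A_lin: "\<And>u x y c. u \<in> V \<Longrightarrow> x \<in> V \<Longrightarrow> y \<in> V \<Longrightarrow> A u (c *\<^sub>R x + y) = c * A u x + A u y"
    and A_iv: "\<And>u v. u \<in> V \<Longrightarrow> v \<in> V \<Longrightarrow> \<bar>A u v\<bar> \<le> C * (nV u + 1) powr (p - 1) * nV v"
    \<comment> \<open>sigma : V -> L_2(K,H)\<close>
    and sig_HS: "\<And>v. v \<in> V \<Longrightarrow> summable (\<lambda>i. (norm (sig v i))\<^sup>2)"
    \<comment> \<open>(i) hemicontinuity\<close>
    and A_i: "\<And>v w z. v \<in> V \<Longrightarrow> w \<in> V \<Longrightarrow> z \<in> V \<Longrightarrow>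
                continuous_on {0..1} (\<lambda>\<epsilon>. A (w + \<epsilon> *\<^sub>R z) v)"
    \<comment> \<open>(ii) monotonicity\<close>
    and lamB_nn: "lamB \<ge> 0"
    and A_ii: "\<And>v w. v \<in> V \<Longrightarrow> w \<in> V \<Longrightarrow>
                 2 * (A v (v - w) - A w (v - w)) + lamB * (norm (v - w))\<^sup>2
                 \<ge> hs_norm2 (\<lambda>i. sig v i - sig w i)"
    \<comment> \<open>(iii) coercivity; lamD stands for the constant lambda * abs D\<close>
    and mu: "\<mu> > 0" and lamD_nn: "lamD \<ge> 0" and lamA_nn: "lamA \<ge> 0" and kap: "\<kappa> \<ge> 0"
    and A_iii: "\<And>v. v \<in> V \<Longrightarrow>
                 A v v + lamA * (norm v)\<^sup>2 \<ge> \<mu> * nV v powr p - lamD + hs_norm2 (sig v) / 2 - \<kappa>"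
    \<comment> \<open>probability space, filtration, independent Brownian motions\<close>
    and P: "prob_space M"
    and Filt: "filtration (space M) F" and F_sub: "\<And>t. sets (F t) \<subseteq> sets M"
    and BM: "\<And>i. brownian_motion M F (\<beta> i)"
    and BM_indep: "prob_space.indep_vars M (\<lambda>_. Pi\<^sub>M UNIV (\<lambda>_. borel)) (\<lambda>i \<omega> t. \<beta> i t \<omega>) UNIV"
    \<comment> \<open>right-hand side b: progressively measurable, bounded in V*, linear\<close>
    and b_lin: "\<And>\<omega> t x y c. \<omega> \<in> space M \<Longrightarrow> t \<in> {0..T} \<Longrightarrow> x \<in> V \<Longrightarrow> y \<in> V \<Longrightarrow>
                  b \<omega> t (c *\<^sub>R x + y) = c * b \<omega> t x + b \<omega> t y"
    and b_bdd: "\<exists>Cb. \<forall>\<omega>\<in>space M. \<forall>t\<in>{0..T}. \<forall>v\<in>V. \<bar>b \<omega> t v\<bar> \<le> Cb * nV v"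
    and b_prog: "\<And>t v. t \<in> {0..T} \<Longrightarrow> v \<in> V \<Longrightarrow>
                  (\<lambda>(\<omega>, s). b \<omega> s v) \<in> borel_measurable (F t \<Otimes>\<^sub>M restrict_space lborel {0..t})"
    \<comment> \<open>finite-dimensional subspace V_h of V\<close>
    and Vh: "subspace Vh" "Vh \<subseteq> V" "\<exists>B. finite B \<and> Vh = span B"
    \<comment> \<open>initial value\<close>
    and u0_meas: "u0 \<in> borel_measurable (F 0)"
    and u0_L2: "integrable M (\<lambda>\<omega>. (norm (u0 \<omega>))\<^sup>2)"
    and u0_Vh: "\<And>\<omega>. \<omega> \<in> space M \<Longrightarrow> u0 \<omega> \<in> Vh"
    \<comment> \<open>time discretisation\<close>
    and N: "N \<ge> 1" and tau: "\<tau> = T / real N" and tau_small: "\<tau> * lamB \<le> 1"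
  shows "(\<exists>u. discrete_solution M Vh A b sig \<beta> N \<tau> r u0 u \<and>
              (\<forall>n\<in>{1..N}. u n \<in> borel_measurable (F (real n * \<tau>)))) \<and>
         (\<forall>u u'. discrete_solution M Vh A b sig \<beta> N \<tau> r u0 u \<and>
                 discrete_solution M Vh A b sig \<beta> N \<tau> r u0 u' \<longrightarrow>
                 (\<forall>n\<in>{1..N}. \<forall>\<omega>\<in>space M. u n \<omega> = u' n \<omega>))"
proof -
  obtain B where "finite B" "Vh = span B"
    using Vh(3) by blast
  then obtain E where E: "finite E" "orthonormal_set E" "Vh = span E"
    using orthonormal_basis_of_span by metis
  have \<tau>: "\<tau> > 0" "T = real N * \<tau>" "\<tau> * (lamB / 2) < 1"
    using T N tau tau_small by simp_all
  have A_lin': "\<And>u. u \<in> V \<Longrightarrow> linear_form_on V (A u)"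
    using A_lin unfolding linear_form_on_def by blast
  have EV: "span E \<subseteq> V" and q: "0 \<le> p - 1"
    using Vh(2) E(3) p by simp_all
  note A = operator_regularity_on_span[OF V E(1,2) EV A_lin' A_iv q A_i sig_HS lamB_nn A_ii, folded E(3)]
  have b_lin': "linear_form_on Vh (b_avg b \<tau> \<omega> n)" if "\<omega> \<in> space M" "n \<in> {1..N}" for \<omega> n
    by (rule b_avg_linear_form_on_progressive[OF \<tau>(1) that(2) \<tau>(2) Filt that(1) Vh(2) b_lin b_bdd b_prog])
  have b_meas: "(\<lambda>\<omega>. b_avg b \<tau> \<omega> n v) \<in> borel_measurable (F (real n * \<tau>))"
    if "n \<in> {1..N}" "v \<in> Vh" for n v
    using that \<tau> Vh(2) by (intro b_avg_measurable[OF b_prog]) (auto simp: mult_right_mono)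
  have dB_meas: "dBeta \<beta> \<tau> n i \<in> borel_measurable (F (real n * \<tau>))" for n i
    using BM[of i] \<tau>(1) unfolding brownian_motion_def by (intro dBeta_measurable[OF Filt]) auto
  show ?thesis
  proof (intro conjI allI impI ballI)
    show "\<exists>u. discrete_solution M Vh A b sig \<beta> N \<tau> r u0 u \<and>
              (\<forall>n\<in>{1..N}. u n \<in> borel_measurable (F (real n * \<tau>)))"
      using \<tau>(1) A b_lin' b_meas dB_meas u0_Vh
      by (intro discrete_solution_exists[OF E _ \<tau>(3) _ _ _ _ _ _ _ Filt u0_meas]) auto
    fix u u' n \<omega>
    assume "discrete_solution M Vh A b sig \<beta> N \<tau> r u0 u \<and> discrete_solution M Vh A b sig \<beta> N \<tau> r u0 u'"
      and "n \<in> {1..N}" "\<omega> \<in> space M"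
    then show "u n \<omega> = u' n \<omega>"
      using discrete_solution_unique[OF A(2) _ \<tau>(3) Vh(1)] \<tau>(1) by auto
  qed
qed

end
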